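(* Let $\mathcal{D}$ be a $2$-$(|\mathcal{P}|,r+1,\lambda)$ design with point set $\mathcal{P}$, where $r>1$, admitting a group $G$ of automorphisms that is 2-transitive on points and transitive on blocks. Then there is at most one feasible $G$-orbit on the set of flags of $\mathcal{D}$.
   Context: Designs have no repeated blocks; blocks are identified with their point sets. A flag is a pair $(\sigma,L)$ with $\sigma$ a point and $L$ a block containing $\sigma$. For a $G$-orbit $\Omega$ on flags and a point $\sigma$, $\Omega(\sigma)$ is the set of flags of $\Omega$ with point-entry $\sigma$. $\Omega$ is feasible if $|\Omega(\sigma)|\ge 2$ for some (hence all) point $\sigma$, and for some (hence all) flag $(\sigma,L)\in\Omega$ the setwise stabilizer $G_{\sigma,L}$ of $L$ in $G_\sigma$ is transitive on $L\setminus\{\sigma\}$. *)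

theory Defs
  imports "HOL-Algebra.Bij"
begin

text \<open>A 2-(v,k,lambda) design with point set P and block set B (blocks are point sets,
so there are no repeated blocks).\<close>
definition two_design :: "'a set \<Rightarrow> 'a set set \<Rightarrow> nat \<Rightarrow> nat \<Rightarrow> bool" where
  "two_design P B k lam \<longleftrightarrow>
     finite P \<and> (\<forall>L\<in>B. L \<subseteq> P \<and> card L = k) \<and> lam > 0 \<and>
     (\<forall>x\<in>P. \<forall>y\<in>P. x \<noteq> y \<longrightarrow> card {L\<in>B. x \<in> L \<and> y \<in> L} = lam)"

definition aut_group :: "'a set \<Rightarrow> 'a set set \<Rightarrow> ('a \<Rightarrow> 'a) set \<Rightarrow> bool" where
  "aut_group P B G \<longleftrightarrow> subgroup G (BijGroup P) \<and> (\<forall>g\<in>G. (\<lambda>L. g ` L) ` B = B)"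

definition two_transitive :: "'a set \<Rightarrow> ('a \<Rightarrow> 'a) set \<Rightarrow> bool" where
  "two_transitive P G \<longleftrightarrow>
     (\<forall>x\<in>P. \<forall>y\<in>P. \<forall>u\<in>P. \<forall>v\<in>P. x \<noteq> y \<longrightarrow> u \<noteq> v \<longrightarrow>
        (\<exists>g\<in>G. g x = u \<and> g y = v))"

definition block_transitive :: "'a set set \<Rightarrow> ('a \<Rightarrow> 'a) set \<Rightarrow> bool" where
  "block_transitive B G \<longleftrightarrow> (\<forall>L\<in>B. \<forall>M\<in>B. \<exists>g\<in>G. g ` L = M)"

definition flags :: "'a set set \<Rightarrow> ('a \<times> 'a set) set" where
  "flags B = {(\<sigma>, L). L \<in> B \<and> \<sigma> \<in> L}"

definition flag_orbit :: "('a \<Rightarrow> 'a) set \<Rightarrow> 'a \<times> 'a set \<Rightarrow> ('a \<times> 'a set) set" where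
  "flag_orbit G f = (\<lambda>g. (g (fst f), g ` (snd f))) ` G"

definition flag_orbits :: "'a set set \<Rightarrow> ('a \<Rightarrow> 'a) set \<Rightarrow> ('a \<times> 'a set) set set" where
  "flag_orbits B G = flag_orbit G ` flags B"

definition orbit_at :: "('a \<times> 'a set) set \<Rightarrow> 'a \<Rightarrow> ('a \<times> 'a set) set" where
  "orbit_at \<Omega> \<sigma> = {f \<in> \<Omega>. fst f = \<sigma>}"

definition flag_stab :: "('a \<Rightarrow> 'a) set \<Rightarrow> 'a \<Rightarrow> 'a set \<Rightarrow> ('a \<Rightarrow> 'a) set" where
  "flag_stab G \<sigma> L = {g \<in> G. g \<sigma> = \<sigma> \<and> g ` L = L}"

definition transitive_on :: "('a \<Rightarrow> 'a) set \<Rightarrow> 'a set \<Rightarrow> bool" where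
  "transitive_on H X \<longleftrightarrow> (\<forall>x\<in>X. \<forall>y\<in>X. \<exists>h\<in>H. h x = y)"

definition feasible :: "'a set \<Rightarrow> ('a \<Rightarrow> 'a) set \<Rightarrow> ('a \<times> 'a set) set \<Rightarrow> bool" where
  "feasible P G \<Omega> \<longleftrightarrow>
     (\<exists>\<sigma>\<in>P. card (orbit_at \<Omega> \<sigma>) \<ge> 2) \<and>
     (\<exists>\<sigma> L. (\<sigma>, L) \<in> \<Omega> \<and> transitive_on (flag_stab G \<sigma> L) (L - {\<sigma>}))"

end

theory Submission
  imports Defs
begin

text \<open>
Only block-transitivity and blocks of size at least 3 matter. If two flags (\<sigma>, L) and
(\<tau>, L) on the same block both have stabilisers transitive on the remaining points of L,
pick a third point \<mu> of L: the stabiliser of (\<sigma>, L) moves \<tau> to \<mu> and the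
stabiliser of (\<tau>, L) moves \<mu> to \<sigma>, so both flags lie in one orbit. Transitivity of
the flag stabiliser is preserved under conjugation, so block-transitivity moves a suitable flag of
any feasible orbit onto any given block.
\<close>

context
  fixes P :: "'a set" and G :: "('a \<Rightarrow> 'a) set"
  assumes subgroup_Bij: "subgroup G (BijGroup P)"
begin

lemma bij_betw_of_mem:
  assumes "g \<in> G"
  shows "bij_betw g P P"
  using subgroup.subset[OF subgroup_Bij] assms by (auto simp: BijGroup_def Bij_def)

lemma compose_mem:
  assumes "g \<in> G" "k \<in> G"
  shows "compose P k g \<in> G"
proof -
  have "g \<in> Bij P" "k \<in> Bij P"
    using subgroup.subset[OF subgroup_Bij] assms by (auto simp: BijGroup_def)
  then show ?thesis
    using subgroup.m_closed[OF subgroup_Bij assms(2,1)] by (simp add: BijGroup_def)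
qed

lemma obtain_inverse:
  assumes "g \<in> G"
  obtains g' where "g' \<in> G" "\<And>x. x \<in> P \<Longrightarrow> g' (g x) = x" "\<And>x. x \<in> P \<Longrightarrow> g (g' x) = x"
proof
  have "g \<in> Bij P"
    using subgroup.subset[OF subgroup_Bij] assms by (auto simp: BijGroup_def)
  then show "inv\<^bsub>BijGroup P\<^esub> g \<in> G"
    and "x \<in> P \<Longrightarrow> (inv\<^bsub>BijGroup P\<^esub> g) (g x) = x"
    and "x \<in> P \<Longrightarrow> g ((inv\<^bsub>BijGroup P\<^esub> g) x) = x" for x
    using subgroup.m_inv_closed[OF subgroup_Bij assms] bij_betw_of_mem[OF assms]
    by (auto simp: inv_BijGroup bij_betw_inv_into_left bij_betw_inv_into_right bij_betwE)
qed

lemma mem_flag_orbitI: "g \<in> G \<Longrightarrow> (g x, g ` A) \<in> flag_orbit G (x, A)"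
  by (force simp: flag_orbit_def)

lemma flag_orbit_image_subset:
  assumes "g \<in> G" "A \<subseteq> P" "x \<in> P"
  shows "flag_orbit G (g x, g ` A) \<subseteq> flag_orbit G (x, A)"
proof
  fix f assume "f \<in> flag_orbit G (g x, g ` A)"
  then obtain k where k: "k \<in> G" "f = (k (g x), k ` g ` A)"
    by (auto simp: flag_orbit_def)
  have "compose P k g ` A = k ` g ` A"
    unfolding image_image by (rule image_cong) (use assms(2) in \<open>auto simp: compose_eq\<close>)
  then have "f = (compose P k g x, compose P k g ` A)"
    using k(2) assms(3) by (simp add: compose_eq)
  then show "f \<in> flag_orbit G (x, A)"
    using mem_flag_orbitI[OF compose_mem[OF assms(1) k(1)]] by simp
qed

lemma flag_orbit_image:
  assumes "g \<in> G" "A \<subseteq> P" "x \<in> P"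
  shows "flag_orbit G (g x, g ` A) = flag_orbit G (x, A)"
proof
  obtain g' where g': "g' \<in> G" "\<And>x. x \<in> P \<Longrightarrow> g' (g x) = x"
    using obtain_inverse[OF assms(1)] by blast
  have gP: "g ` A \<subseteq> P" "g x \<in> P"
    using bij_betwE[OF bij_betw_of_mem[OF assms(1)]] assms(2,3) by auto
  have "g' ` g ` A = A"
    unfolding image_image using g'(2) assms(2) by (simp add: subset_eq cong: image_cong)
  then have "(x, A) = (g' (g x), g' ` g ` A)"
    using g'(2) assms(3) by simp
  then show "flag_orbit G (x, A) \<subseteq> flag_orbit G (g x, g ` A)"
    using flag_orbit_image_subset[OF g'(1) gP] by simp
qed (use flag_orbit_image_subset[OF assms] in simp)

lemma flag_orbit_eq_if_mem:
  assumes "f \<in> flag_orbit G (x, A)" "A \<subseteq> P" "x \<in> P"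
  shows "flag_orbit G f = flag_orbit G (x, A)"
proof -
  obtain g where "g \<in> G" "f = (g x, g ` A)"
    using assms(1) by (auto simp: flag_orbit_def)
  then show ?thesis
    using flag_orbit_image assms(2,3) by simp
qed

lemma transitive_on_flag_stab_image:
  assumes g: "g \<in> G" and "L \<subseteq> P" "\<sigma> \<in> P"
    and trans: "transitive_on (flag_stab G \<sigma> L) (L - {\<sigma>})"
  shows "transitive_on (flag_stab G (g \<sigma>) (g ` L)) (g ` L - {g \<sigma>})"
  unfolding transitive_on_def
proof (intro ballI)
  fix x y assume "x \<in> g ` L - {g \<sigma>}" "y \<in> g ` L - {g \<sigma>}"
  then obtain a b where ab: "a \<in> L - {\<sigma>}" "b \<in> L - {\<sigma>}" "x = g a" "y = g b" by blast
  obtain k where "k \<in> flag_stab G \<sigma> L" "k a = b"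
    using trans ab(1,2) unfolding transitive_on_def by blast
  then have k: "k \<in> G" "k \<sigma> = \<sigma>" "k ` L = L" "k a = b"
    by (simp_all add: flag_stab_def)
  obtain g' where g': "g' \<in> G" "\<And>x. x \<in> P \<Longrightarrow> g' (g x) = x" "\<And>x. x \<in> P \<Longrightarrow> g (g' x) = x"
    using obtain_inverse[OF g] by blast
  define c where "c = compose P g (compose P k g')"
  have c_mem: "c \<in> G"
    unfolding c_def using compose_mem g k(1) g'(1) by blast
  have gP: "g z \<in> P" if "z \<in> P" for z
    using bij_betwE[OF bij_betw_of_mem[OF g]] that by blast
  have c_conj: "c (g z) = g (k z)" if "z \<in> P" for z
    using that gP g'(2) by (simp add: c_def compose_eq)
  have "c (g \<sigma>) = g \<sigma>" "c x = y"
    using c_conj ab k assms(2,3) by auto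
  moreover have "c ` g ` L = g ` L"
  proof -
    have "c ` g ` L = g ` k ` L"
      unfolding image_image using c_conj assms(2) by (intro image_cong) auto
    then show ?thesis
      using k(3) by simp
  qed
  ultimately show "\<exists>h\<in>flag_stab G (g \<sigma>) (g ` L). h x = y"
    using c_mem by (auto simp: flag_stab_def)
qed

lemma flag_orbit_eq_if_transitive_flag_stabs:
  assumes "L \<subseteq> P" "card L \<ge> 3" "\<sigma> \<in> L" "\<tau> \<in> L"
    and trans_\<sigma>: "transitive_on (flag_stab G \<sigma> L) (L - {\<sigma>})"
    and trans_\<tau>: "transitive_on (flag_stab G \<tau> L) (L - {\<tau>})"
  shows "flag_orbit G (\<sigma>, L) = flag_orbit G (\<tau>, L)"
proof (cases "\<sigma> = \<tau>")
  case False
  have "card {\<sigma>, \<tau>} = 2"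
    using False by simp
  then have "\<not> L \<subseteq> {\<sigma>, \<tau>}"
    using card_mono[of "{\<sigma>, \<tau>}" L] assms(2) by auto
  then obtain \<mu> where \<mu>: "\<mu> \<in> L" "\<mu> \<noteq> \<sigma>" "\<mu> \<noteq> \<tau>" by blast
  obtain k where "k \<in> flag_stab G \<sigma> L" "k \<tau> = \<mu>"
    using trans_\<sigma> \<mu> False assms(4) unfolding transitive_on_def by blast
  then have "(\<mu>, L) \<in> flag_orbit G (\<tau>, L)"
    using mem_flag_orbitI[of k \<tau> L] by (simp add: flag_stab_def)
  then have \<tau>\<mu>: "flag_orbit G (\<mu>, L) = flag_orbit G (\<tau>, L)"
    using flag_orbit_eq_if_mem assms(1,4) by blast
  obtain k' where "k' \<in> flag_stab G \<tau> L" "k' \<mu> = \<sigma>"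
    using trans_\<tau> \<mu> False assms(3) unfolding transitive_on_def by blast
  then have "(\<sigma>, L) \<in> flag_orbit G (\<mu>, L)"
    using mem_flag_orbitI[of k' \<mu> L] by (simp add: flag_stab_def)
  then show ?thesis
    using flag_orbit_eq_if_mem assms(1) \<mu>(1) \<tau>\<mu> by blast
qed simp

end

lemma feasible_flag_orbit_obtain_transitive_flag:
  assumes aut: "aut_group P B G" and blocks: "\<forall>L\<in>B. L \<subseteq> P"
    and "\<Omega> \<in> flag_orbits B G" "feasible P G \<Omega>"
  obtains \<sigma> L where "L \<in> B" "\<sigma> \<in> L" "\<Omega> = flag_orbit G (\<sigma>, L)"
    "transitive_on (flag_stab G \<sigma> L) (L - {\<sigma>})"
proof -
  obtain a A where aA: "A \<in> B" "a \<in> A" "\<Omega> = flag_orbit G (a, A)"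
    using assms(3) by (auto simp: flag_orbits_def flags_def)
  obtain \<sigma> L where \<sigma>L: "(\<sigma>, L) \<in> \<Omega>" "transitive_on (flag_stab G \<sigma> L) (L - {\<sigma>})"
    using assms(4) by (auto simp: feasible_def)
  then obtain g where g: "g \<in> G" "\<sigma> = g a" "L = g ` A"
    using aA(3) by (auto simp: flag_orbit_def)
  have "(\<lambda>M. g ` M) ` B = B"
    using aut g(1) unfolding aut_group_def by blast
  then have "L \<in> B" "\<sigma> \<in> L"
    using g aA(1,2) by blast+
  moreover have "\<Omega> = flag_orbit G (\<sigma>, L)"
  proof -
    have "subgroup G (BijGroup P)"
      using aut by (simp add: aut_group_def)
    moreover have "A \<subseteq> P" "a \<in> P"
      using blocks aA(1,2) by auto
    ultimately show ?thesis
      using flag_orbit_eq_if_mem \<sigma>L(1) aA(3) by metis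
  qed
  ultimately show ?thesis
    using that \<sigma>L(2) by blast
qed

theorem lemma3p1:
  fixes P :: "'a set" and B :: "'a set set" and G :: "('a \<Rightarrow> 'a) set"
    and r lam :: nat
  assumes "two_design P B (r + 1) lam"
    and "r > 1"
    and "aut_group P B G"
    and "two_transitive P G"
    and "block_transitive B G"
  shows "\<forall>\<Omega>1\<in>flag_orbits B G. \<forall>\<Omega>2\<in>flag_orbits B G.
           feasible P G \<Omega>1 \<longrightarrow> feasible P G \<Omega>2 \<longrightarrow> \<Omega>1 = \<Omega>2"
proof (intro ballI impI)
  fix \<Omega>1 \<Omega>2
  assume orbits: "\<Omega>1 \<in> flag_orbits B G" "\<Omega>2 \<in> flag_orbits B G"
    and feasible: "feasible P G \<Omega>1" "feasible P G \<Omega>2"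
  have sg: "subgroup G (BijGroup P)"
    using assms(3) by (simp add: aut_group_def)
  have blocks: "\<forall>L\<in>B. L \<subseteq> P" "\<forall>L\<in>B. card L = r + 1"
    using assms(1) by (simp_all add: two_design_def)
  obtain \<sigma>1 L1 where flag1: "L1 \<in> B" "\<sigma>1 \<in> L1" "\<Omega>1 = flag_orbit G (\<sigma>1, L1)"
    "transitive_on (flag_stab G \<sigma>1 L1) (L1 - {\<sigma>1})"
    using feasible_flag_orbit_obtain_transitive_flag[OF assms(3) blocks(1) orbits(1) feasible(1)] .
  obtain \<sigma>2 L2 where flag2: "L2 \<in> B" "\<sigma>2 \<in> L2" "\<Omega>2 = flag_orbit G (\<sigma>2, L2)"
    "transitive_on (flag_stab G \<sigma>2 L2) (L2 - {\<sigma>2})"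
    using feasible_flag_orbit_obtain_transitive_flag[OF assms(3) blocks(1) orbits(2) feasible(2)] .
  obtain h where h: "h \<in> G" "h ` L1 = L2"
    using assms(5) flag1(1) flag2(1) unfolding block_transitive_def by blast
  have L1P: "L1 \<subseteq> P" "\<sigma>1 \<in> P" and L2P: "L2 \<subseteq> P" "card L2 \<ge> 3"
    using blocks flag1(1,2) flag2(1) assms(2) by auto
  have "\<Omega>1 = flag_orbit G (h \<sigma>1, L2)"
    using flag_orbit_image[OF sg h(1) L1P] flag1(3) h(2) by simp
  also have "\<dots> = \<Omega>2"
    using flag_orbit_eq_if_transitive_flag_stabs[OF sg L2P _ flag2(2) _ flag2(4)]
      transitive_on_flag_stab_image[OF sg h(1) L1P flag1(4)] flag1(2) flag2(3) h(2)
    by blast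
  finally show "\<Omega>1 = \<Omega>2" .
qed

end
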